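(* Let $\boldsymbol{\mathcal{G}}=(\mathcal{V},\boldsymbol{\mathcal{E}},\mu(\cdot))$ be a stochastic digraph with vertex set $\mathbb{Z}_n$, edge sets $\mathcal{E}_1,\dots,\mathcal{E}_h$, and out-neighborhood map $H(x,w)=\{y:(x,y)\in\mathcal{E}_w\}$, such that there is no pair $(i,w)\in\mathbb{Z}_n\times\mathbb{Z}_h$ with $\mu(\{w\})>0$ and $H(i,w)=\emptyset$. Let $\mathcal{Q}\subset\mathbb{Z}_n$ and let $\check{\boldsymbol{\mathcal{G}}}$ be the augmented stochastic digraph on $\mathbb{Z}_{n+2}$ (with the same $\mu$) obtained by replacing, in each $\mathcal{E}_s$, every edge $(i,j)$ with $j\in\mathcal{Q}$ by the edge $(i,n+1)$, and adding the edges $(n+1,n+2)$ and $(n+2,n+2)$ to each $\mathcal{E}_s$. Let $\check H$ be its out-neighborhood map and consider the Markov decision process on states $\mathbb{Z}_{n+2}$ with action space $\mathcal{A}(i)$ at state $i$ equal to the set of tuples $a=(\xi_{1,a},\dots,\xi_{h,a})$ with $\xi_{w,a}\in\check H(i,w)$ for each $w$, transition probabilities $$\check p(j\mid i,a)=\sum_{w\in\{s\in\mathbb{Z}_h:\,\xi_{s,a}=j\}}\mu(\{w\}),$$ and reward $r(i,a,j)=-\mathbb{I}_{\{n+1\}}(j)$. Let $v_\star$ be the optimal state-value function of this MDP, i.e., $v_\star(0,x)=0$ and $v_\star(k,x)=\max_{a\in\mathcal{A}(x)}\sum_{j}\check p(j\mid x,a)\big(r(x,a,j)+v_\star(k-1,j)\big)$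 for $k\geqslant1$. Then for all $k\in\mathbb{Z}_{\geqslant0}$ and all $x\in\mathbb{Z}_n$, $$\mathfrak{V}_{\mathcal{Q}}(k,x)=-v_\star(k,x),$$ where $\mathfrak{V}_{\mathcal{Q}}(k,x):=\inf_{\boldsymbol{x}\in\mathcal{S}(x)}\mathbb{P}\big(\exists\,t\in\{1,\dots,k\}:\boldsymbol{x}_t\in\mathcal{Q}\big)$ is the strong recurrence probability.
   Context: A stochastic digraph is a triple $(\mathbb{Z}_n,\{\mathcal{E}_s\}_{s=1}^h,\mu)$ with $\mathcal{E}_s\subset\mathbb{Z}_n\times\mathbb{Z}_n$ and $\mu$ the common distribution of an i.i.d. sequence $\boldsymbol{w}_k:\Omega\to\mathbb{Z}_h$, $k\in\mathbb{Z}_{\geqslant0}$, on a probability space $(\Omega,\mathcal{F},\mathbb{P})$. A stochastic directed path from $x$ is a map $\omega\mapsto\{\boldsymbol{x}_k(\omega)\}_{k=0}^{\boldsymbol{K}(\omega)}$ with $\boldsymbol{x}_0=x$, $\boldsymbol{x}_{k+1}(\omega)\in H(\boldsymbol{x}_k(\omega),\boldsymbol{w}_k(\omega))$ for all $\omega$ and $k<\boldsymbol{K}(\omega)$, and with $\boldsymbol{x}_{k+1}$ measurable with respect to $\sigma(\boldsymbol{w}_0,\dots,\boldsymbol{w}_k)$ for each $k$. It is maximal if it cannot be extended; $\mathcal{S}(x)$ is the set of maximal stochastic directed paths from $x$. $\mathbb{I}_{A}$ denotes the indicator function of the set $A$. *)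

theory Defs
  imports "HOL-Probability.Probability"
begin

text \<open>Vertices of the stochastic digraph are \<open>{1..n}\<close>, labels are \<open>{1..h}\<close>.
  \<open>E s\<close> is the edge set \<open>\<E>_s\<close>; \<open>\<mu>\<close> is a pmf on \<open>{1..h}\<close>.\<close>

definition outnb :: "(nat \<Rightarrow> (nat \<times> nat) set) \<Rightarrow> nat \<Rightarrow> nat \<Rightarrow> nat set" where
  "outnb E x s = {y. (x, y) \<in> E s}"

definition past_sigma :: "'a measure \<Rightarrow> (nat \<Rightarrow> 'a \<Rightarrow> nat) \<Rightarrow> nat \<Rightarrow> 'a measure" where
  "past_sigma M w k = sigma (space M) {w i -` A \<inter> space M | i A. i \<le> k}"

text \<open>A stochastic directed path from \<open>x\<close> is encoded by \<open>y :: nat \<Rightarrow> 'a \<Rightarrow> nat option\<close>: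
  \<open>y k \<omega> = Some (x_k \<omega>)\<close> if \<open>k \<le> K \<omega>\<close> and \<open>None\<close> otherwise.\<close>
definition stoch_path ::
  "'a measure \<Rightarrow> (nat \<Rightarrow> 'a \<Rightarrow> nat) \<Rightarrow> (nat \<Rightarrow> (nat \<times> nat) set) \<Rightarrow> nat \<Rightarrow> (nat \<Rightarrow> 'a \<Rightarrow> nat option) \<Rightarrow> bool" where
  "stoch_path M w E x y \<longleftrightarrow>
     (\<forall>\<omega>\<in>space M. y 0 \<omega> = Some x) \<and>
     (\<forall>\<omega>\<in>space M. \<forall>k. y (Suc k) \<omega> \<noteq> None \<longrightarrow> y k \<omega> \<noteq> None) \<and>
     (\<forall>\<omega>\<in>space M. \<forall>k i j. y k \<omega> = Some i \<longrightarrow> y (Suc k) \<omega> = Some j \<longrightarrow> j \<in> outnb E i (w k \<omega>)) \<and>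
     (\<forall>k. y (Suc k) \<in> measurable (past_sigma M w k) (count_space UNIV))"

definition max_stoch_paths ::
  "'a measure \<Rightarrow> (nat \<Rightarrow> 'a \<Rightarrow> nat) \<Rightarrow> (nat \<Rightarrow> (nat \<times> nat) set) \<Rightarrow> nat \<Rightarrow> (nat \<Rightarrow> 'a \<Rightarrow> nat option) set" where
  "max_stoch_paths M w E x = {y. stoch_path M w E x y \<and>
     (\<forall>\<omega>\<in>space M. \<forall>k i. y k \<omega> = Some i \<longrightarrow> y (Suc k) \<omega> = None \<longrightarrow> outnb E i (w k \<omega>) = {})}"

definition strong_rec_prob ::
  "'a measure \<Rightarrow> (nat \<Rightarrow> 'a \<Rightarrow> nat) \<Rightarrow> (nat \<Rightarrow> (nat \<times> nat) set) \<Rightarrow> nat set \<Rightarrow> nat \<Rightarrow> nat \<Rightarrow> real" where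
  "strong_rec_prob M w E Q k x =
     (INF y\<in>max_stoch_paths M w E x. measure M {\<omega>\<in>space M. \<exists>t\<in>{1..k}. \<exists>q\<in>Q. y t \<omega> = Some q})"

definition aug_edges :: "nat \<Rightarrow> (nat \<Rightarrow> (nat \<times> nat) set) \<Rightarrow> nat set \<Rightarrow> nat \<Rightarrow> (nat \<times> nat) set" where
  "aug_edges n E Q s = {(i, if j \<in> Q then n + 1 else j) | i j. (i, j) \<in> E s}
                        \<union> {(n + 1, n + 2), (n + 2, n + 2)}"

text \<open>Actions at state \<open>i\<close>: tuples \<open>\<xi>\<close> indexed by the labels of positive probability
  (coordinates of null labels do not influence the transition probabilities).\<close>
definition actions :: "nat \<Rightarrow> nat \<Rightarrow> (nat \<Rightarrow> (nat \<times> nat) set) \<Rightarrow> nat pmf \<Rightarrow> nat set \<Rightarrow> nat \<Rightarrow> (nat \<Rightarrow> nat) set" where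
  "actions n h E \<mu> Q i = (\<Pi>\<^sub>E s\<in>{s\<in>{1..h}. pmf \<mu> s > 0}. outnb (aug_edges n E Q) i s)"

definition trans_prob :: "nat \<Rightarrow> nat pmf \<Rightarrow> nat \<Rightarrow> (nat \<Rightarrow> nat) \<Rightarrow> real" where
  "trans_prob h \<mu> j a = (\<Sum>s\<in>{s\<in>{1..h}. pmf \<mu> s > 0 \<and> a s = j}. pmf \<mu> s)"

definition reward :: "nat \<Rightarrow> nat \<Rightarrow> real" where
  "reward n j = (if j = n + 1 then -1 else 0)"

fun vstar :: "nat \<Rightarrow> nat \<Rightarrow> (nat \<Rightarrow> (nat \<times> nat) set) \<Rightarrow> nat pmf \<Rightarrow> nat set \<Rightarrow> nat \<Rightarrow> nat \<Rightarrow> real" where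
  "vstar n h E \<mu> Q 0 x = 0"
| "vstar n h E \<mu> Q (Suc k) x =
     Max ((\<lambda>a. \<Sum>j\<in>{1..n+2}. trans_prob h \<mu> j a * (reward n j + vstar n h E \<mu> Q k j))
          ` actions n h E \<mu> Q x)"

end

theory Submission
  imports Defs
begin

text \<open>Since the labels are i.i.d. and the position of a stochastic path after \<open>t\<close> steps is
  measurable with respect to the first \<open>t\<close> labels, a path is a decision tree: a map from words of
  labels to vertices, and the probability of an event about the first \<open>k\<close> labels is a sum over the
  words of length \<open>k\<close> weighted by products of \<open>\<mu>\<close>. Splitting off the first label turns the
  probability that a tree meets \<open>Q\<close> within \<open>k\<close> steps into a one-step recursion. By induction on
  \<open>k\<close>, the tree of every maximal path meets \<open>Q\<close> with probability at least the Bellman value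
  \<open>m (k+1) x = min\<^sub>b \<Sum>\<^sub>s \<mu> s \<cdot> (if b s \<in> Q then 1 else m k (b s))\<close>, where \<open>b\<close> chooses an
  out-neighbour of \<open>x\<close> for each label, and the tree that always makes a minimising choice attains
  it. In the augmented decision process, entering \<open>Q\<close> means moving to \<open>n+1\<close> and collecting the
  reward \<open>-1\<close>, after which the process is trapped in the zero-reward sink \<open>n+2\<close>; hence
  \<open>v\<^sub>\<star> = -m\<close> on the original vertices.\<close>

section \<open>Words of labels and decision trees\<close>

definition words :: "nat \<Rightarrow> 'b set \<Rightarrow> 'b list set" where
  "words k A = {xs. set xs \<subseteq> A \<and> length xs = k}"

lemma finite_words: "finite A \<Longrightarrow> finite (words k A)"
  unfolding words_def by (rule finite_lists_length_eq)

lemma words_0 [simp]: "words 0 A = {[]}"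
  by (auto simp: words_def)

lemma sum_words_Suc:
  "(\<Sum>xs\<in>words (Suc k) A. g xs) = (\<Sum>s\<in>A. \<Sum>xs\<in>words k A. g (s # xs))"
proof -
  have "words (Suc k) A = (\<lambda>(s, xs). s # xs) ` (A \<times> words k A)"
    by (auto simp: words_def length_Suc_conv)
  moreover have "inj_on (\<lambda>(s, xs). s # xs) (A \<times> words k A)"
    by (auto simp: inj_on_def)
  ultimately show ?thesis
    by (simp add: sum.reindex sum.cartesian_product case_prod_beta')
qed

definition word_weight :: "'b pmf \<Rightarrow> 'b list \<Rightarrow> real" where
  "word_weight \<mu> xs = prod_list (map (pmf \<mu>) xs)"

lemma word_weight_Nil [simp]: "word_weight \<mu> [] = 1"
  by (simp add: word_weight_def)

lemma word_weight_Cons [simp]: "word_weight \<mu> (s # xs) = pmf \<mu> s * word_weight \<mu> xs"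
  by (simp add: word_weight_def)

lemma sum_word_weight:
  assumes "finite (set_pmf \<mu>)"
  shows "(\<Sum>xs\<in>words k (set_pmf \<mu>). word_weight \<mu> xs) = 1"
proof (induction k)
  case (Suc k)
  have "(\<Sum>xs\<in>words (Suc k) (set_pmf \<mu>). word_weight \<mu> xs)
      = (\<Sum>s\<in>set_pmf \<mu>. pmf \<mu> s * (\<Sum>xs\<in>words k (set_pmf \<mu>). word_weight \<mu> xs))"
    by (simp add: sum_words_Suc sum_distrib_left)
  also have "\<dots> = 1"
    using assms by (simp add: Suc.IH sum_pmf_eq_1)
  finally show ?case .
qed simp

text \<open>A decision tree \<open>Y\<close> maps a word of labels to the position reached after reading it,
  \<open>None\<close> once the path has stopped.\<close>

definition tree_hits :: "'v set \<Rightarrow> nat \<Rightarrow> ('b list \<Rightarrow> 'v option) \<Rightarrow> 'b list \<Rightarrow> bool" where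
  "tree_hits Q k Y xs \<longleftrightarrow> (\<exists>t\<in>{1..k}. \<exists>q\<in>Q. Y (take t xs) = Some q)"

lemma not_tree_hits_0 [simp]: "\<not> tree_hits Q 0 Y xs"
  by (simp add: tree_hits_def)

lemma tree_hits_Cons:
  "tree_hits Q (Suc k) Y (s # xs) \<longleftrightarrow> (\<exists>q\<in>Q. Y [s] = Some q) \<or> tree_hits Q k (\<lambda>xs. Y (s # xs)) xs"
proof -
  have "{1..Suc k} = insert 1 (Suc ` {1..k})"
    by (auto simp: image_iff not0_implies_Suc)
  then show ?thesis
    by (simp add: tree_hits_def del: image_Suc_atLeastAtMost)
qed

definition tree_hit_prob :: "'b pmf \<Rightarrow> 'v set \<Rightarrow> nat \<Rightarrow> ('b list \<Rightarrow> 'v option) \<Rightarrow> real" where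
  "tree_hit_prob \<mu> Q k Y = (\<Sum>xs\<in>words k (set_pmf \<mu>). word_weight \<mu> xs * of_bool (tree_hits Q k Y xs))"

lemma tree_hit_prob_0 [simp]: "tree_hit_prob \<mu> Q 0 Y = 0"
  by (simp add: tree_hit_prob_def)

lemma tree_hit_prob_Suc:
  assumes "finite (set_pmf \<mu>)"
  shows "tree_hit_prob \<mu> Q (Suc k) Y =
    (\<Sum>s\<in>set_pmf \<mu>. pmf \<mu> s *
       (if \<exists>q\<in>Q. Y [s] = Some q then 1 else tree_hit_prob \<mu> Q k (\<lambda>xs. Y (s # xs))))"
  unfolding tree_hit_prob_def sum_words_Suc tree_hits_Cons
  by (intro sum.cong refl)
     (simp add: sum_distrib_left[symmetric] mult.assoc sum_word_weight[OF assms])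

section \<open>I.i.d. labels\<close>

definition label_prefix :: "(nat \<Rightarrow> 'a \<Rightarrow> 'b) \<Rightarrow> nat \<Rightarrow> 'a \<Rightarrow> 'b list" where
  "label_prefix w t \<omega> = map (\<lambda>i. w i \<omega>) [0..<t]"

lemma length_label_prefix [simp]: "length (label_prefix w t \<omega>) = t"
  by (simp add: label_prefix_def)

lemma label_prefix_Suc: "label_prefix w (Suc t) \<omega> = label_prefix w t \<omega> @ [w t \<omega>]"
  by (simp add: label_prefix_def)

lemma take_label_prefix: "t \<le> k \<Longrightarrow> take t (label_prefix w k \<omega>) = label_prefix w t \<omega>"
  by (simp add: label_prefix_def take_map)

lemma nth_label_prefix: "i < t \<Longrightarrow> label_prefix w t \<omega> ! i = w i \<omega>"
  by (simp add: label_prefix_def)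

lemma space_past_sigma [simp]: "space (past_sigma M w t) = space M"
  by (simp add: past_sigma_def space_measure_of_conv)

lemma sets_past_sigma:
  "sets (past_sigma M w t) = sigma_sets (space M) {w i -` A \<inter> space M | i A. i \<le> t}"
  unfolding past_sigma_def by (rule sets_measure_of) auto

lemma measurable_past_sigma_label:
  assumes "i \<le> t"
  shows "w i \<in> measurable (past_sigma M w t) (count_space UNIV)"
proof (rule measurableI)
  fix A :: "nat set"
  have "w i -` A \<inter> space M \<in> sigma_sets (space M) {w i -` A \<inter> space M | i A. i \<le> t}"
    using assms by (intro sigma_sets.Basic) blast
  then show "w i -` A \<inter> space (past_sigma M w t) \<in> sets (past_sigma M w t)"
    by (simp add: sets_past_sigma)
qed simp

lemma past_sigma_measurable_eq:
  assumes f: "f \<in> measurable (past_sigma M w t) (count_space UNIV)"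
    and \<omega>: "\<omega> \<in> space M" "\<omega>' \<in> space M"
    and eq: "label_prefix w (Suc t) \<omega> = label_prefix w (Suc t) \<omega>'"
  shows "f \<omega> = f \<omega>'"
proof -
  have same_labels: "w i \<omega> = w i \<omega>'" if "i \<le> t" for i
    using arg_cong[OF eq, of "\<lambda>xs. xs ! i"] that by (simp add: nth_label_prefix)
  have invariant: "\<omega> \<in> A \<longleftrightarrow> \<omega>' \<in> A"
    if "A \<in> sigma_sets (space M) {w i -` A \<inter> space M | i A. i \<le> t}" for A
    using that
  proof induction
    case (Basic a)
    then obtain i B where "a = w i -` B \<inter> space M" "i \<le> t"
      by blast
    then show ?case
      using same_labels[of i] \<omega> by auto
  qed (use \<omega> in auto)
  have "f -` {f \<omega>} \<inter> space M \<in> sigma_sets (space M) {w i -` A \<inter> space M | i A. i \<le> t}"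
    using measurable_sets[OF f, of "{f \<omega>}"] by (simp add: sets_past_sigma)
  from invariant[OF this] \<omega> show ?thesis
    by simp
qed

locale iid_labels = prob_space M for M :: "'a measure" +
  fixes w :: "nat \<Rightarrow> 'a \<Rightarrow> 'b" and \<mu> :: "'b pmf" and L :: "'b set"
  assumes finite_labels: "finite L"
    and labels_in: "\<And>k \<omega>. \<omega> \<in> space M \<Longrightarrow> w k \<omega> \<in> L"
    and indep_labels: "indep_vars (\<lambda>_. count_space UNIV) w UNIV"
    and distr_labels: "\<And>k. distr M (count_space UNIV) (w k) = measure_pmf \<mu>"
begin

lemma measurable_label: "w k \<in> measurable M (count_space UNIV)"
  using indep_labels by (auto simp: indep_vars_def)

lemma prob_label_eq: "prob (w k -` {s} \<inter> space M) = pmf \<mu> s"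
  using measure_distr[OF measurable_label, of "{s}" k] distr_labels
  by (simp add: measure_pmf_single)

lemma set_pmf_subset_labels: "set_pmf \<mu> \<subseteq> L"
proof
  fix s assume "s \<in> set_pmf \<mu>"
  then have "prob (w 0 -` {s} \<inter> space M) \<noteq> 0"
    by (simp add: prob_label_eq set_pmf_iff)
  then have "w 0 -` {s} \<inter> space M \<noteq> {}"
    by auto
  then obtain \<omega> where "\<omega> \<in> space M" "w 0 \<omega> = s"
    by blast
  then show "s \<in> L"
    using labels_in by blast
qed

lemma finite_set_pmf: "finite (set_pmf \<mu>)"
  using finite_subset[OF set_pmf_subset_labels finite_labels] .

lemma label_prefix_eq_Inter:
  assumes "length xs = k" "k > 0"
  shows "{\<omega>\<in>space M. label_prefix w k \<omega> = xs} = (\<Inter>i<k. w i -` {xs ! i} \<inter> space M)"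
  using assms by (auto simp: label_prefix_def list_eq_iff_nth_eq)

lemma label_prefix_event: "{\<omega>\<in>space M. label_prefix w k \<omega> = xs} \<in> events"
proof -
  consider "length xs \<noteq> k" | "k = 0" "xs = []" | "length xs = k" "k > 0"
    by fastforce
  then show ?thesis
  proof cases
    case 1
    then have "{\<omega>\<in>space M. label_prefix w k \<omega> = xs} = {}"
      by auto
    then show ?thesis
      by (simp only: sets.empty_sets)
  next
    case 2
    then show ?thesis
      by (simp add: label_prefix_def)
  next
    case 3
    then show ?thesis
      unfolding label_prefix_eq_Inter[OF 3]
      by (intro sets.finite_INT measurable_sets[OF measurable_label]) auto
  qed
qed

lemma prob_label_prefix_eq:
  assumes "length xs = k"
  shows "prob {\<omega>\<in>space M. label_prefix w k \<omega> = xs} = word_weight \<mu> xs"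
proof (cases "k = 0")
  case True
  then show ?thesis
    using assms prob_space by (simp add: label_prefix_def)
next
  case False
  have "prob (\<Inter>i<k. w i -` {xs ! i} \<inter> space M) = (\<Prod>i<k. prob (w i -` {xs ! i} \<inter> space M))"
    using False by (intro indep_varsD[OF indep_labels]) auto
  also have "\<dots> = word_weight \<mu> xs"
    using assms by (simp add: prob_label_eq word_weight_def prod.list_conv_set_nth atLeast0LessThan)
  finally show ?thesis
    using assms False by (simp add: label_prefix_eq_Inter)
qed

lemma label_prefix_exists:
  assumes "set xs \<subseteq> set_pmf \<mu>"
  obtains \<omega> where "\<omega> \<in> space M" "label_prefix w (length xs) \<omega> = xs"
proof -
  have "word_weight \<mu> xs > 0"
    using assms by (induction xs) (auto simp: set_pmf_iff)
  then have "{\<omega>\<in>space M. label_prefix w (length xs) \<omega> = xs} \<noteq> {}"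
    using prob_label_prefix_eq[of xs] by force
  then show ?thesis
    using that by blast
qed

lemma prob_label_prefix_event:
  "prob {\<omega>\<in>space M. R (label_prefix w k \<omega>)} =
     (\<Sum>xs\<in>words k (set_pmf \<mu>). word_weight \<mu> xs * of_bool (R xs))"
proof -
  let ?A = "\<lambda>xs. {\<omega>\<in>space M. label_prefix w k \<omega> = xs \<and> R xs}"
  have "{\<omega>\<in>space M. R (label_prefix w k \<omega>)} = (\<Union>xs\<in>words k L. ?A xs)"
    using labels_in by (auto simp: words_def label_prefix_def)
  moreover have "?A xs \<in> events" for xs
    using label_prefix_event[of k xs] by (cases "R xs") auto
  ultimately have "prob {\<omega>\<in>space M. R (label_prefix w k \<omega>)} = (\<Sum>xs\<in>words k L. prob (?A xs))"
    by (simp only:) (rule finite_measure_finite_Union,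
        auto simp: finite_words finite_labels disjoint_family_on_def)
  also have "\<dots> = (\<Sum>xs\<in>words k L. word_weight \<mu> xs * of_bool (R xs))"
    by (intro sum.cong refl) (auto simp: words_def prob_label_prefix_eq)
  also have "\<dots> = (\<Sum>xs\<in>words k (set_pmf \<mu>). word_weight \<mu> xs * of_bool (R xs))"
  proof (rule sum.mono_neutral_right)
    show "words k (set_pmf \<mu>) \<subseteq> words k L"
      using set_pmf_subset_labels by (auto simp: words_def)
    show "\<forall>xs\<in>words k L - words k (set_pmf \<mu>). word_weight \<mu> xs * of_bool (R xs) = 0"
    proof
      fix xs assume "xs \<in> words k L - words k (set_pmf \<mu>)"
      then obtain s where "s \<in> set xs" "pmf \<mu> s = 0"
        by (auto simp: words_def set_pmf_iff)
      then show "word_weight \<mu> xs * of_bool (R xs) = 0"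
        by (force simp: word_weight_def prod_list_zero_iff)
    qed
  qed (simp add: finite_words finite_labels)
  finally show ?thesis .
qed

end

section \<open>The Bellman recursion for the hitting probability\<close>

locale stochastic_digraph = iid_labels M w \<mu> "{1..h}"
  for M :: "'a measure" and w :: "nat \<Rightarrow> 'a \<Rightarrow> nat" and \<mu> :: "nat pmf" and h :: nat +
  fixes n :: nat and E :: "nat \<Rightarrow> (nat \<times> nat) set" and Q :: "nat set"
  assumes edges_in: "\<forall>s\<in>{1..h}. E s \<subseteq> {1..n} \<times> {1..n}"
    and no_dead_end: "\<not> (\<exists>i\<in>{1..n}. \<exists>s\<in>{1..h}. pmf \<mu> s > 0 \<and> outnb E i s = {})"
begin

lemma outnb_subset: "s \<in> {1..h} \<Longrightarrow> outnb E i s \<subseteq> {1..n}"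
  using edges_in by (auto simp: outnb_def)

lemma outnb_nonempty:
  assumes "i \<in> {1..n}" "s \<in> set_pmf \<mu>"
  shows "outnb E i s \<noteq> {}"
proof -
  have "s \<in> {1..h}"
    using assms(2) set_pmf_subset_labels by (rule subsetD[rotated])
  moreover have "pmf \<mu> s > 0"
    using assms(2) by (rule pmf_positive)
  ultimately show ?thesis
    using no_dead_end assms(1) by auto
qed

definition successor_choices :: "nat \<Rightarrow> (nat \<Rightarrow> nat) set" where
  "successor_choices x = (\<Pi>\<^sub>E s\<in>set_pmf \<mu>. outnb E x s)"

lemma finite_successor_choices: "finite (successor_choices x)"
  unfolding successor_choices_def
  using rev_finite_subset[OF finite_atLeastAtMost outnb_subset] set_pmf_subset_labels
  by (intro finite_PiE finite_set_pmf) blast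

lemma successor_choices_nonempty: "x \<in> {1..n} \<Longrightarrow> successor_choices x \<noteq> {}"
  by (simp add: successor_choices_def PiE_eq_empty_iff outnb_nonempty)

lemma successor_choice_vertex:
  "b \<in> successor_choices x \<Longrightarrow> s \<in> set_pmf \<mu> \<Longrightarrow> b s \<in> {1..n}"
  unfolding successor_choices_def using outnb_subset set_pmf_subset_labels by blast

definition choice_cost :: "(nat \<Rightarrow> real) \<Rightarrow> (nat \<Rightarrow> nat) \<Rightarrow> real" where
  "choice_cost v b = (\<Sum>s\<in>set_pmf \<mu>. pmf \<mu> s * (if b s \<in> Q then 1 else v (b s)))"

primrec min_hit_prob :: "nat \<Rightarrow> nat \<Rightarrow> real" where
  "min_hit_prob 0 x = 0"
| "min_hit_prob (Suc k) x = Min (choice_cost (min_hit_prob k) ` successor_choices x)"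

definition greedy_choice :: "nat \<Rightarrow> nat \<Rightarrow> nat \<Rightarrow> nat" where
  "greedy_choice k x = (SOME b. b \<in> successor_choices x \<and>
     choice_cost (min_hit_prob k) b = min_hit_prob (Suc k) x)"

lemma greedy_choice:
  assumes "x \<in> {1..n}"
  shows "greedy_choice k x \<in> successor_choices x"
    and "choice_cost (min_hit_prob k) (greedy_choice k x) = min_hit_prob (Suc k) x"
proof -
  have "min_hit_prob (Suc k) x \<in> choice_cost (min_hit_prob k) ` successor_choices x"
    using finite_successor_choices successor_choices_nonempty[OF assms] by simp
  then have "\<exists>b. b \<in> successor_choices x \<and> choice_cost (min_hit_prob k) b = min_hit_prob (Suc k) x"
    by auto
  then have "greedy_choice k x \<in> successor_choices x \<and>
      choice_cost (min_hit_prob k) (greedy_choice k x) = min_hit_prob (Suc k) x"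
    unfolding greedy_choice_def by (rule someI_ex)
  then show "greedy_choice k x \<in> successor_choices x"
    and "choice_cost (min_hit_prob k) (greedy_choice k x) = min_hit_prob (Suc k) x"
    by simp_all
qed

definition follows_edges :: "(nat list \<Rightarrow> nat option) \<Rightarrow> bool" where
  "follows_edges Y \<longleftrightarrow> (\<forall>xs s i. set xs \<subseteq> set_pmf \<mu> \<longrightarrow> s \<in> set_pmf \<mu> \<longrightarrow>
     Y xs = Some i \<longrightarrow> i \<in> {1..n} \<longrightarrow> (\<exists>j\<in>outnb E i s. Y (xs @ [s]) = Some j))"

lemma follows_edges_Cons:
  assumes "follows_edges Y" "s \<in> set_pmf \<mu>"
  shows "follows_edges (\<lambda>xs. Y (s # xs))"
  unfolding follows_edges_def
proof (intro allI impI)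
  fix xs s' i
  assume "set xs \<subseteq> set_pmf \<mu>" "s' \<in> set_pmf \<mu>" "Y (s # xs) = Some i" "i \<in> {1..n}"
  then show "\<exists>j\<in>outnb E i s'. Y (s # xs @ [s']) = Some j"
    using assms(1)[unfolded follows_edges_def, rule_format, of "s # xs" s' i] assms(2) by simp
qed

lemma min_hit_prob_le_tree_hit_prob:
  assumes "x \<in> {1..n}" "Y [] = Some x" "follows_edges Y"
  shows "min_hit_prob k x \<le> tree_hit_prob \<mu> Q k Y"
  using assms
proof (induction k arbitrary: x Y)
  case (Suc k)
  define b where "b = restrict (\<lambda>s. the (Y [s])) (set_pmf \<mu>)"
  have first_step: "\<exists>j\<in>outnb E x s. Y [s] = Some j" if "s \<in> set_pmf \<mu>" for s
    using Suc.prems(3)[unfolded follows_edges_def, rule_format, of "[]" s x] Suc.prems(1,2) that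
    by simp
  have b: "Y [s] = Some (b s)" "b s \<in> outnb E x s" if "s \<in> set_pmf \<mu>" for s
    using first_step[OF that] that by (auto simp: b_def)
  then have "b \<in> successor_choices x"
    by (simp add: successor_choices_def b_def)
  then have "min_hit_prob (Suc k) x \<le> choice_cost (min_hit_prob k) b"
    by (simp add: finite_successor_choices)
  also have "\<dots> \<le> (\<Sum>s\<in>set_pmf \<mu>. pmf \<mu> s *
      (if \<exists>q\<in>Q. Y [s] = Some q then 1 else tree_hit_prob \<mu> Q k (\<lambda>xs. Y (s # xs))))"
    unfolding choice_cost_def
  proof (intro sum_mono mult_left_mono)
    fix s assume s: "s \<in> set_pmf \<mu>"
    have "min_hit_prob k (b s) \<le> tree_hit_prob \<mu> Q k (\<lambda>xs. Y (s # xs))"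
      using successor_choice_vertex[OF \<open>b \<in> successor_choices x\<close> s] b(1)[OF s]
        follows_edges_Cons[OF Suc.prems(3) s]
      by (intro Suc.IH) simp_all
    then show "(if b s \<in> Q then 1 else min_hit_prob k (b s)) \<le>
        (if \<exists>q\<in>Q. Y [s] = Some q then 1 else tree_hit_prob \<mu> Q k (\<lambda>xs. Y (s # xs)))"
      using b(1)[OF s] by simp
  qed simp
  also have "\<dots> = tree_hit_prob \<mu> Q (Suc k) Y"
    by (simp add: tree_hit_prob_Suc finite_set_pmf)
  finally show ?case .
qed simp

definition follows_greedy :: "nat \<Rightarrow> (nat list \<Rightarrow> nat option) \<Rightarrow> bool" where
  "follows_greedy k Y \<longleftrightarrow> (\<forall>xs s i. set xs \<subseteq> set_pmf \<mu> \<longrightarrow> length xs < k \<longrightarrow> s \<in> set_pmf \<mu> \<longrightarrow>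
     Y xs = Some i \<longrightarrow> i \<in> {1..n} \<longrightarrow> Y (xs @ [s]) = Some (greedy_choice (k - Suc (length xs)) i s))"

lemma follows_greedy_Cons:
  assumes "follows_greedy (Suc k) Y" "s \<in> set_pmf \<mu>"
  shows "follows_greedy k (\<lambda>xs. Y (s # xs))"
  unfolding follows_greedy_def
proof (intro allI impI)
  fix xs s' i
  assume "set xs \<subseteq> set_pmf \<mu>" "length xs < k" "s' \<in> set_pmf \<mu>" "Y (s # xs) = Some i" "i \<in> {1..n}"
  then show "Y (s # xs @ [s']) = Some (greedy_choice (k - Suc (length xs)) i s')"
    using assms(1)[unfolded follows_greedy_def, rule_format, of "s # xs" s' i] assms(2) by simp
qed

lemma tree_hit_prob_greedy:
  assumes "x \<in> {1..n}" "Y [] = Some x" "follows_greedy k Y"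
  shows "tree_hit_prob \<mu> Q k Y = min_hit_prob k x"
  using assms
proof (induction k arbitrary: x Y)
  case (Suc k)
  define b where "b = greedy_choice k x"
  have b: "Y [s] = Some (b s)" "b s \<in> {1..n}" if "s \<in> set_pmf \<mu>" for s
    using Suc.prems(3)[unfolded follows_greedy_def, rule_format, of "[]" s x] that Suc.prems(1,2)
      successor_choice_vertex[OF greedy_choice(1)[OF Suc.prems(1)] that]
    by (simp_all add: b_def)
  have "tree_hit_prob \<mu> Q (Suc k) Y = (\<Sum>s\<in>set_pmf \<mu>. pmf \<mu> s *
      (if \<exists>q\<in>Q. Y [s] = Some q then 1 else tree_hit_prob \<mu> Q k (\<lambda>xs. Y (s # xs))))"
    by (simp add: tree_hit_prob_Suc finite_set_pmf)
  also have "\<dots> = choice_cost (min_hit_prob k) b"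
    unfolding choice_cost_def
  proof (intro sum.cong refl)
    fix s assume s: "s \<in> set_pmf \<mu>"
    have "tree_hit_prob \<mu> Q k (\<lambda>xs. Y (s # xs)) = min_hit_prob k (b s)"
      using b[OF s] follows_greedy_Cons[OF Suc.prems(3) s] by (intro Suc.IH) simp_all
    then show "pmf \<mu> s * (if \<exists>q\<in>Q. Y [s] = Some q then 1 else tree_hit_prob \<mu> Q k (\<lambda>xs. Y (s # xs))) =
        pmf \<mu> s * (if b s \<in> Q then 1 else min_hit_prob k (b s))"
      using b(1)[OF s] by simp
  qed
  also have "\<dots> = min_hit_prob (Suc k) x"
    using greedy_choice(2)[OF Suc.prems(1)] by (simp add: b_def)
  finally show ?case .
qed simp

section \<open>Stochastic paths as decision trees\<close>

definition path_tree :: "(nat \<Rightarrow> 'a \<Rightarrow> nat option) \<Rightarrow> nat list \<Rightarrow> nat option" where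
  "path_tree y xs = y (length xs) (SOME \<omega>. \<omega> \<in> space M \<and> label_prefix w (length xs) \<omega> = xs)"

lemma path_tree_label_prefix:
  assumes y: "stoch_path M w E x y" and \<omega>: "\<omega> \<in> space M"
  shows "path_tree y (label_prefix w t \<omega>) = y t \<omega>"
proof -
  define \<omega>' where "\<omega>' = (SOME \<omega>'. \<omega>' \<in> space M \<and> label_prefix w t \<omega>' = label_prefix w t \<omega>)"
  have \<omega>': "\<omega>' \<in> space M \<and> label_prefix w t \<omega>' = label_prefix w t \<omega>"
    unfolding \<omega>'_def by (rule someI[of _ \<omega>]) (simp add: \<omega>)
  have "y t \<omega>' = y t \<omega>"
  proof (cases t)
    case 0
    then show ?thesis
      using y \<omega> \<omega>' by (simp add: stoch_path_def)
  next
    case (Suc t')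
    then show ?thesis
      using y \<omega> \<omega>' by (intro past_sigma_measurable_eq[of "y t" M w t']) (auto simp: stoch_path_def)
  qed
  then show ?thesis
    by (simp add: path_tree_def \<omega>'_def)
qed

lemma path_tree_Nil:
  assumes y: "stoch_path M w E x y"
  shows "path_tree y [] = Some x"
proof -
  obtain \<omega> where \<omega>: "\<omega> \<in> space M"
    using not_empty by blast
  have "label_prefix w 0 \<omega> = []"
    by (simp add: label_prefix_def)
  then show ?thesis
    using path_tree_label_prefix[OF y \<omega>, of 0] y \<omega> by (simp add: stoch_path_def)
qed

lemma path_tree_snoc:
  assumes y: "stoch_path M w E x y" and "set xs \<subseteq> set_pmf \<mu>" "s \<in> set_pmf \<mu>"
  obtains \<omega> where "\<omega> \<in> space M" "w (length xs) \<omega> = s"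
    "path_tree y xs = y (length xs) \<omega>" "path_tree y (xs @ [s]) = y (Suc (length xs)) \<omega>"
proof -
  obtain \<omega> where \<omega>: "\<omega> \<in> space M" "label_prefix w (length (xs @ [s])) \<omega> = xs @ [s]"
    using label_prefix_exists[of "xs @ [s]"] assms(2,3) by auto
  then have "label_prefix w (length xs) \<omega> = xs" "w (length xs) \<omega> = s"
    by (simp_all add: label_prefix_Suc)
  then show ?thesis
    using that \<omega> path_tree_label_prefix[OF y \<omega>(1), of "length xs"]
      path_tree_label_prefix[OF y \<omega>(1), of "Suc (length xs)"]
    by (simp add: label_prefix_Suc)
qed

lemma prob_hit_eq_tree_hit_prob:
  assumes y: "stoch_path M w E x y"
  shows "prob {\<omega>\<in>space M. \<exists>t\<in>{1..k}. \<exists>q\<in>Q. y t \<omega> = Some q} = tree_hit_prob \<mu> Q k (path_tree y)"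
proof -
  have "tree_hits Q k (path_tree y) (label_prefix w k \<omega>) \<longleftrightarrow> (\<exists>t\<in>{1..k}. \<exists>q\<in>Q. y t \<omega> = Some q)"
    if "\<omega> \<in> space M" for \<omega>
    using path_tree_label_prefix[OF y that] by (auto simp: tree_hits_def take_label_prefix)
  then have "{\<omega>\<in>space M. \<exists>t\<in>{1..k}. \<exists>q\<in>Q. y t \<omega> = Some q} =
      {\<omega>\<in>space M. tree_hits Q k (path_tree y) (label_prefix w k \<omega>)}"
    by auto
  then show ?thesis
    by (simp add: prob_label_prefix_event tree_hit_prob_def)
qed

lemma max_path_follows_edges:
  assumes y: "y \<in> max_stoch_paths M w E x"
  shows "follows_edges (path_tree y)"
  unfolding follows_edges_def
proof (intro allI impI)
  fix xs s i
  assume xs: "set xs \<subseteq> set_pmf \<mu>" and s: "s \<in> set_pmf \<mu>"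
    and i: "path_tree y xs = Some i" "i \<in> {1..n}"
  have path: "stoch_path M w E x y"
    using y by (simp add: max_stoch_paths_def)
  obtain \<omega> where \<omega>: "\<omega> \<in> space M" "w (length xs) \<omega> = s"
    "path_tree y xs = y (length xs) \<omega>" "path_tree y (xs @ [s]) = y (Suc (length xs)) \<omega>"
    using path_tree_snoc[OF path xs s] .
  show "\<exists>j\<in>outnb E i s. path_tree y (xs @ [s]) = Some j"
  proof (cases "y (Suc (length xs)) \<omega>")
    case None
    then have "outnb E i s = {}"
      using y \<omega> i by (auto simp: max_stoch_paths_def)
    then show ?thesis
      using outnb_nonempty[OF i(2) s] by contradiction
  next
    case (Some j)
    then have "j \<in> outnb E i s"
      using path \<omega> i unfolding stoch_path_def by metis
    then show ?thesis
      using Some \<omega> by auto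
  qed
qed

text \<open>With horizon \<open>k\<close>, at time \<open>t < k\<close> the remaining horizon is \<open>k - t\<close>, whence the index
  \<open>k - Suc t\<close> of the greedy choice. After time \<open>k\<close>, or off the support of \<open>\<mu>\<close> (a null set), the
  greedy path follows an arbitrary edge, so that it is maximal.\<close>
definition greedy_step :: "nat \<Rightarrow> nat \<Rightarrow> nat \<Rightarrow> nat \<Rightarrow> nat option" where
  "greedy_step k t i s =
     (if t < k \<and> s \<in> set_pmf \<mu> \<and> i \<in> {1..n} then Some (greedy_choice (k - Suc t) i s)
      else if outnb E i s = {} then None else Some (SOME j. j \<in> outnb E i s))"

primrec greedy_path :: "nat \<Rightarrow> nat \<Rightarrow> nat \<Rightarrow> 'a \<Rightarrow> nat option" where
  "greedy_path k x 0 \<omega> = Some x"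
| "greedy_path k x (Suc t) \<omega> = Option.bind (greedy_path k x t \<omega>) (\<lambda>i. greedy_step k t i (w t \<omega>))"

lemma greedy_step_edge: "greedy_step k t i s = Some j \<Longrightarrow> j \<in> outnb E i s"
proof (cases "t < k \<and> s \<in> set_pmf \<mu> \<and> i \<in> {1..n}")
  case True
  then show "greedy_step k t i s = Some j \<Longrightarrow> j \<in> outnb E i s"
    using greedy_choice(1)[of i "k - Suc t"]
    by (auto simp: greedy_step_def successor_choices_def)
next
  case False
  then show "greedy_step k t i s = Some j \<Longrightarrow> j \<in> outnb E i s"
    by (auto simp: greedy_step_def some_in_eq split: if_splits)
qed

lemma greedy_step_None: "greedy_step k t i s = None \<Longrightarrow> outnb E i s = {}"
  by (auto simp: greedy_step_def split: if_splits)

lemma measurable_greedy_path: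
  "t \<le> Suc t' \<Longrightarrow> greedy_path k x t \<in> measurable (past_sigma M w t') (count_space UNIV)"
proof (induction t)
  case 0
  have "greedy_path k x 0 = (\<lambda>_. Some x)"
    by auto
  then show ?case
    by simp
next
  case (Suc t)
  have label: "w t \<in> measurable (past_sigma M w t') (count_space UNIV)"
    using Suc.prems by (intro measurable_past_sigma_label) simp
  have step: "(\<lambda>\<omega>. Option.bind z (\<lambda>i. greedy_step k t i (w t \<omega>)))
      \<in> measurable (past_sigma M w t') (count_space UNIV)" for z
    using measurable_compose[OF label, of "\<lambda>v. Option.bind z (\<lambda>i. greedy_step k t i v)"]
    by simp
  show ?case
    using measurable_compose_countable'[OF step Suc.IH] Suc.prems by simp
qed

lemma greedy_path_max: "greedy_path k x \<in> max_stoch_paths M w E x"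
proof -
  have "stoch_path M w E x (greedy_path k x)"
    unfolding stoch_path_def
    using greedy_step_edge measurable_greedy_path[of "Suc _" _ k x] by (auto simp: bind_eq_Some_conv)
  moreover have "outnb E i (w t \<omega>) = {}"
    if "greedy_path k x t \<omega> = Some i" "greedy_path k x (Suc t) \<omega> = None" for t \<omega> i
    using that greedy_step_None by simp
  ultimately show ?thesis
    by (simp add: max_stoch_paths_def)
qed

lemma greedy_path_follows_greedy: "follows_greedy k (path_tree (greedy_path k x))"
  unfolding follows_greedy_def
proof (intro allI impI)
  fix xs s i
  assume xs: "set xs \<subseteq> set_pmf \<mu>" and "length xs < k" and s: "s \<in> set_pmf \<mu>"
    and i: "path_tree (greedy_path k x) xs = Some i" "i \<in> {1..n}"
  have "stoch_path M w E x (greedy_path k x)"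
    using greedy_path_max by (simp add: max_stoch_paths_def)
  then obtain \<omega> where \<omega>: "w (length xs) \<omega> = s"
    "path_tree (greedy_path k x) xs = greedy_path k x (length xs) \<omega>"
    "path_tree (greedy_path k x) (xs @ [s]) = greedy_path k x (Suc (length xs)) \<omega>"
    using path_tree_snoc[OF _ xs s] by blast
  then have "greedy_path k x (length xs) \<omega> = Some i"
    using i(1) by simp
  then show "path_tree (greedy_path k x) (xs @ [s]) = Some (greedy_choice (k - Suc (length xs)) i s)"
    using \<omega>(1,3) \<open>length xs < k\<close> s i(2) by (simp add: greedy_step_def)
qed

lemma strong_rec_prob_eq_min_hit_prob:
  assumes x: "x \<in> {1..n}"
  shows "strong_rec_prob M w E Q k x = min_hit_prob k x"
proof -
  let ?hit = "\<lambda>y. prob {\<omega>\<in>space M. \<exists>t\<in>{1..k}. \<exists>q\<in>Q. y t \<omega> = Some q}"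
  have lower: "min_hit_prob k x \<le> ?hit y" if y: "y \<in> max_stoch_paths M w E x" for y
  proof -
    have path: "stoch_path M w E x y"
      using y by (simp add: max_stoch_paths_def)
    show ?thesis
      unfolding prob_hit_eq_tree_hit_prob[OF path]
      by (rule min_hit_prob_le_tree_hit_prob[OF x path_tree_Nil[OF path] max_path_follows_edges[OF y]])
  qed
  have greedy: "?hit (greedy_path k x) = min_hit_prob k x"
  proof -
    have path: "stoch_path M w E x (greedy_path k x)"
      using greedy_path_max by (simp add: max_stoch_paths_def)
    show ?thesis
      unfolding prob_hit_eq_tree_hit_prob[OF path]
      by (rule tree_hit_prob_greedy[OF x path_tree_Nil[OF path] greedy_path_follows_greedy])
  qed
  have "min_hit_prob k x \<in> ?hit ` max_stoch_paths M w E x"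
    using greedy greedy_path_max[of k x] by (rule image_eqI[OF sym])
  then show ?thesis
    unfolding strong_rec_prob_def using lower by (intro cInf_eq_minimum) auto
qed

section \<open>The augmented Markov decision process\<close>

definition redirect :: "nat \<Rightarrow> nat" where
  "redirect j = (if j \<in> Q then n + 1 else j)"

lemma positive_labels_eq_set_pmf: "{s\<in>{1..h}. pmf \<mu> s > 0} = set_pmf \<mu>"
  unfolding pmf_positive_iff using set_pmf_subset_labels by blast

lemma actions_eq_PiE: "actions n h E \<mu> Q i = (\<Pi>\<^sub>E s\<in>set_pmf \<mu>. outnb (aug_edges n E Q) i s)"
  unfolding actions_def positive_labels_eq_set_pmf ..

lemma sum_trans_prob:
  assumes "finite J" "a ` set_pmf \<mu> \<subseteq> J"
  shows "(\<Sum>j\<in>J. trans_prob h \<mu> j a * g j) = (\<Sum>s\<in>set_pmf \<mu>. pmf \<mu> s * g (a s))"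
proof -
  have "{s\<in>{1..h}. pmf \<mu> s > 0 \<and> a s = j} = {s. s \<in> set_pmf \<mu> \<and> a s = j}" for j
    using positive_labels_eq_set_pmf by blast
  then have "(\<Sum>j\<in>J. trans_prob h \<mu> j a * g j) =
      (\<Sum>j\<in>J. \<Sum>s | s \<in> set_pmf \<mu> \<and> a s = j. pmf \<mu> s * g (a s))"
    unfolding trans_prob_def sum_distrib_right by (intro sum.cong refl) auto
  also have "\<dots> = (\<Sum>s\<in>set_pmf \<mu>. pmf \<mu> s * g (a s))"
    using assms finite_set_pmf by (intro sum.group)
  finally show ?thesis .
qed

lemma outnb_aug_edges_subset: "s \<in> {1..h} \<Longrightarrow> outnb (aug_edges n E Q) i s \<subseteq> {1..n+2}"
  using edges_in by (fastforce simp: outnb_def aug_edges_def)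

lemma outnb_aug_edges_absorbing:
  "i \<in> {n+1, n+2} \<Longrightarrow> s \<in> {1..h} \<Longrightarrow> outnb (aug_edges n E Q) i s = {n+2}"
  using edges_in by (fastforce simp: outnb_def aug_edges_def)

lemma outnb_aug_edges_redirect:
  "i \<in> {1..n} \<Longrightarrow> outnb (aug_edges n E Q) i s = redirect ` outnb E i s"
  by (auto simp: outnb_def aug_edges_def redirect_def)

lemma vstar_Suc_eq_Max:
  "vstar n h E \<mu> Q (Suc k) i = Max ((\<lambda>a. \<Sum>s\<in>set_pmf \<mu>. pmf \<mu> s *
     (reward n (a s) + vstar n h E \<mu> Q k (a s))) ` actions n h E \<mu> Q i)"
proof -
  have "(\<Sum>j\<in>{1..n+2}. trans_prob h \<mu> j a * (reward n j + vstar n h E \<mu> Q k j)) =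
      (\<Sum>s\<in>set_pmf \<mu>. pmf \<mu> s * (reward n (a s) + vstar n h E \<mu> Q k (a s)))"
    if a: "a \<in> actions n h E \<mu> Q i" for a
  proof (rule sum_trans_prob)
    show "a ` set_pmf \<mu> \<subseteq> {1..n+2}"
    proof
      fix j assume "j \<in> a ` set_pmf \<mu>"
      then obtain s where s: "s \<in> set_pmf \<mu>" "j = a s"
        by blast
      have "a s \<in> outnb (aug_edges n E Q) i s"
        using PiE_mem[OF a[unfolded actions_eq_PiE] s(1)] .
      then show "j \<in> {1..n+2}"
        using outnb_aug_edges_subset[of s i] set_pmf_subset_labels s by blast
    qed
  qed simp
  then show ?thesis
    unfolding vstar.simps by (intro arg_cong[where f = Max] image_cong) simp_all
qed

lemma vstar_Suc_absorbing:
  assumes "i \<in> {n+1, n+2}"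
  shows "vstar n h E \<mu> Q (Suc k) i = vstar n h E \<mu> Q k (n+2)"
proof -
  have "actions n h E \<mu> Q i = (\<Pi>\<^sub>E s\<in>set_pmf \<mu>. {n+2})"
    unfolding actions_eq_PiE using assms set_pmf_subset_labels
    by (intro PiE_cong) (auto simp: outnb_aug_edges_absorbing)
  also have "\<dots> = {\<lambda>s\<in>set_pmf \<mu>. n+2}"
    using PiE_singleton[of "\<lambda>s\<in>set_pmf \<mu>. n+2" "set_pmf \<mu>"] by (simp cong: PiE_cong)
  finally have actions: "actions n h E \<mu> Q i = {\<lambda>s\<in>set_pmf \<mu>. n+2}" .
  have "(\<Sum>s\<in>set_pmf \<mu>. pmf \<mu> s * (reward n ((\<lambda>s\<in>set_pmf \<mu>. n+2) s) +
      vstar n h E \<mu> Q k ((\<lambda>s\<in>set_pmf \<mu>. n+2) s))) = (\<Sum>s\<in>set_pmf \<mu>. pmf \<mu> s) * vstar n h E \<mu> Q k (n+2)"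
    unfolding sum_distrib_right by (intro sum.cong refl) (simp add: reward_def)
  also have "\<dots> = vstar n h E \<mu> Q k (n+2)"
    using finite_set_pmf by (simp add: sum_pmf_eq_1)
  finally show ?thesis
    unfolding vstar_Suc_eq_Max actions by (simp only: image_insert image_empty Max_singleton)
qed

lemma vstar_sink: "vstar n h E \<mu> Q k (n+2) = 0"
proof (induction k)
  case (Suc k)
  have "vstar n h E \<mu> Q (Suc k) (n+2) = vstar n h E \<mu> Q k (n+2)"
    by (rule vstar_Suc_absorbing) simp
  also have "\<dots> = 0"
    by (rule Suc.IH)
  finally show ?case .
qed simp

lemma vstar_redirect_target: "vstar n h E \<mu> Q k (n+1) = 0"
proof (cases k)
  case (Suc k')
  have "vstar n h E \<mu> Q (Suc k') (n+1) = vstar n h E \<mu> Q k' (n+2)"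
    by (rule vstar_Suc_absorbing) simp
  then show ?thesis
    by (simp only: Suc vstar_sink)
qed simp

lemma actions_eq_redirect:
  assumes x: "x \<in> {1..n}"
  shows "actions n h E \<mu> Q x = (\<lambda>b. \<lambda>s\<in>set_pmf \<mu>. redirect (b s)) ` successor_choices x"
proof
  show "(\<lambda>b. \<lambda>s\<in>set_pmf \<mu>. redirect (b s)) ` successor_choices x \<subseteq> actions n h E \<mu> Q x"
    using x by (auto simp: actions_eq_PiE successor_choices_def outnb_aug_edges_redirect)
next
  show "actions n h E \<mu> Q x \<subseteq> (\<lambda>b. \<lambda>s\<in>set_pmf \<mu>. redirect (b s)) ` successor_choices x"
  proof
    fix a assume a: "a \<in> actions n h E \<mu> Q x"
    have "a s \<in> redirect ` outnb E x s" if "s \<in> set_pmf \<mu>" for s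
      using PiE_mem[OF a[unfolded actions_eq_PiE] that] x by (simp add: outnb_aug_edges_redirect)
    then have "\<forall>s\<in>set_pmf \<mu>. \<exists>j. j \<in> outnb E x s \<and> redirect j = a s"
      by (metis imageE)
    then obtain b where b: "\<forall>s\<in>set_pmf \<mu>. b s \<in> outnb E x s \<and> redirect (b s) = a s"
      by metis
    then have "restrict b (set_pmf \<mu>) \<in> successor_choices x"
      by (simp add: successor_choices_def)
    moreover have "a = (\<lambda>s\<in>set_pmf \<mu>. redirect (restrict b (set_pmf \<mu>) s))"
      using a b by (intro ext) (auto simp: actions_eq_PiE PiE_def extensional_def)
    ultimately show "a \<in> (\<lambda>b. \<lambda>s\<in>set_pmf \<mu>. redirect (b s)) ` successor_choices x"
      by blast
  qed
qed

lemma vstar_eq_neg_min_hit_prob: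
  "x \<in> {1..n} \<Longrightarrow> vstar n h E \<mu> Q k x = - min_hit_prob k x"
proof (induction k arbitrary: x)
  case (Suc k)
  have cost: "(\<Sum>s\<in>set_pmf \<mu>. pmf \<mu> s * (reward n ((\<lambda>s\<in>set_pmf \<mu>. redirect (b s)) s) +
      vstar n h E \<mu> Q k ((\<lambda>s\<in>set_pmf \<mu>. redirect (b s)) s))) = - choice_cost (min_hit_prob k) b"
    if b: "b \<in> successor_choices x" for b
    unfolding choice_cost_def sum_negf[symmetric]
  proof (intro sum.cong refl)
    fix s assume s: "s \<in> set_pmf \<mu>"
    have "b s \<in> {1..n}"
      by (rule successor_choice_vertex[OF b s])
    then show "pmf \<mu> s * (reward n ((\<lambda>s\<in>set_pmf \<mu>. redirect (b s)) s) +
        vstar n h E \<mu> Q k ((\<lambda>s\<in>set_pmf \<mu>. redirect (b s)) s)) =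
        - (pmf \<mu> s * (if b s \<in> Q then 1 else min_hit_prob k (b s)))"
      using s Suc.IH[of "b s"] vstar_redirect_target[of k] by (auto simp: redirect_def reward_def)
  qed
  have "vstar n h E \<mu> Q (Suc k) x = Max (uminus ` choice_cost (min_hit_prob k) ` successor_choices x)"
    unfolding vstar_Suc_eq_Max actions_eq_redirect[OF Suc.prems] image_image
    by (intro arg_cong[where f = Max] image_cong refl cost)
  also have "\<dots> = - min_hit_prob (Suc k) x"
    using finite_successor_choices successor_choices_nonempty[OF Suc.prems] by simp
  finally show ?case .
qed simp

end

theorem proposition2:
  fixes n h :: nat and E :: "nat \<Rightarrow> (nat \<times> nat) set" and \<mu> :: "nat pmf"
    and Q :: "nat set" and M :: "'a measure" and w :: "nat \<Rightarrow> 'a \<Rightarrow> nat"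
  assumes "\<forall>s\<in>{1..h}. E s \<subseteq> {1..n} \<times> {1..n}"
    and "set_pmf \<mu> \<subseteq> {1..h}"
    and "\<not> (\<exists>i\<in>{1..n}. \<exists>s\<in>{1..h}. pmf \<mu> s > 0 \<and> outnb E i s = {})"
    and "Q \<subseteq> {1..n}"
    and "prob_space M"
    and "\<forall>k. \<forall>\<omega>\<in>space M. w k \<omega> \<in> {1..h}"
    and "prob_space.indep_vars M (\<lambda>_. count_space UNIV) w UNIV"
    and "\<forall>k. distr M (count_space UNIV) (w k) = measure_pmf \<mu>"
  shows "\<forall>k. \<forall>x\<in>{1..n}. strong_rec_prob M w E Q k x = - vstar n h E \<mu> Q k x"
proof -
  interpret stochastic_digraph M w \<mu> h n E Q
    using assms by (simp add: stochastic_digraph_def stochastic_digraph_axioms_def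
        iid_labels_def iid_labels_axioms_def)
  show ?thesis
    by (simp add: strong_rec_prob_eq_min_hit_prob vstar_eq_neg_min_hit_prob)
qed

end
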